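(* Let $u\in(0,1)$ and $w\in(0,1]$. For $R>1$ let $$\varphi_R(p)=2(1-uR)w\,p^2+\big(uw(R+1)-2u-2w\big)p+u .$$ Since $\varphi_R(0)=u>0$ and $\varphi_R(1)=-u(1-w+Rw)<0$, this polynomial has a unique root in $[0,1]$; call it $p(R)$. Then $R\mapsto p(R)$ is strictly increasing on $(1,\infty)$, and $p(R)\uparrow 1/2$ as $R\to\infty$.
   Context: $p(R)$ is the fraction of cooperators at any non-zero metastable equilibrium of a population playing a public goods game. In that game $u$ is the mutation rate, $w$ is the cost of cooperation, and $R$ is the multiplication factor. *)

theory Defs
  imports Complex_Main
begin

definition phi :: "real \<Rightarrow> real \<Rightarrow> real \<Rightarrow> real \<Rightarrow> real" where
  "phi u w R p = 2 * (1 - u * R) * w * p ^ 2 + (u * w * (R + 1) - 2 * u - 2 * w) * p + u"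

definition proot :: "real \<Rightarrow> real \<Rightarrow> real \<Rightarrow> real" where
  "proot u w R = (THE p. p \<in> {0..1} \<and> phi u w R p = 0)"

end

theory Submission
  imports Defs
begin

text \<open>Write \<open>\<phi>\<^sub>R(p) = f(p) + R g(p)\<close> with \<open>g(p) = u w p (1 - 2p)\<close>, which is positive on
  \<open>(0, 1/2)\<close>. Since \<open>\<phi>\<^sub>R(0) = u > 0\<close> and \<open>\<phi>\<^sub>R(1/2) = -w(1-u)/2 < 0\<close>, the unique root
  \<open>p(R)\<close> lies in \<open>(0, 1/2)\<close>. For \<open>r < s\<close> we get \<open>\<phi>\<^sub>s(p(r)) = (s - r) g(p(r)) > 0\<close>, so the
  root of \<open>\<phi>\<^sub>s\<close> lies to the right of \<open>p(r)\<close>. Likewise, for fixed \<open>q < 1/2\<close> the value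
  \<open>\<phi>\<^sub>R(q)\<close> is eventually positive, forcing \<open>q < p(R) < 1/2\<close> for large \<open>R\<close>.\<close>

text \<open>Two roots \<open>x, y\<close> would give \<open>c = a x y\<close>, hence \<open>a > 0\<close>, and
  \<open>a + b + c = a (1 - x) (1 - y) \<ge> 0\<close>.\<close>
lemma quadratic_root_unique_in_unit_interval:
  fixes a b c x y :: real
  assumes "c > 0" "a + b + c < 0"
    and x: "x \<in> {0..1}" "a * x^2 + b * x + c = 0"
    and y: "y \<in> {0..1}" "a * y^2 + b * y + c = 0"
  shows "x = y"
proof (rule ccontr)
  assume "x \<noteq> y"
  moreover have "(x - y) * (a * (x + y) + b) = 0"
    using x y by (simp add: algebra_simps power2_eq_square)
  ultimately have b: "b = - a * (x + y)" by simp
  have c: "c = a * x * y"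
    using x(2) unfolding b by (simp add: algebra_simps power2_eq_square)
  have "a + b + c = a * ((1 - x) * (1 - y))"
    unfolding b c by (simp add: algebra_simps)
  moreover have "a > 0"
    using \<open>c > 0\<close> x(1) y(1) unfolding c by (auto simp: zero_less_mult_iff)
  moreover have "(1 - x) * (1 - y) \<ge> 0" using x(1) y(1) by simp
  ultimately show False
    using \<open>a + b + c < 0\<close> mult_nonneg_nonneg[of a "(1 - x) * (1 - y)"] by linarith
qed

lemma phi_linear_in_R:
  "phi u w R p = (2*w*p^2 + (u*w - 2*u - 2*w)*p + u) + R * (u*w*p*(1 - 2*p))"
  unfolding phi_def by (simp add: algebra_simps power2_eq_square)

lemma phi_zero [simp]: "phi u w R 0 = u"
  unfolding phi_def by simp

lemma phi_half: "phi u w R (1/2) = - w * (1 - u) / 2"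
  unfolding phi_def by (simp add: algebra_simps power2_eq_square)

lemma phi_one: "phi u w R 1 = - u * (1 - w + R * w)"
  unfolding phi_def by (simp add: algebra_simps)

lemma continuous_on_phi: "continuous_on S (phi u w R)"
  unfolding phi_def by (intro continuous_intros)

context
  fixes u w :: real
  assumes u: "0 < u" "u < 1" and w: "0 < w" "w \<le> 1"
begin

lemma phi_half_neg: "phi u w R (1/2) < 0"
  using u w unfolding phi_half by (simp add: mult_pos_pos)

lemma phi_root_unique:
  assumes "R > 1" "x \<in> {0..1}" "phi u w R x = 0" "y \<in> {0..1}" "phi u w R y = 0"
  shows "x = y"
proof (rule quadratic_root_unique_in_unit_interval)
  have "1 - w + R * w > 0" using w \<open>R > 1\<close> by (simp add: add_nonneg_pos)
  then show "2 * (1 - u * R) * w + (u * w * (R + 1) - 2 * u - 2 * w) + u < 0"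
    using phi_one[of u w R] u by (simp add: phi_def)
qed (use assms u in \<open>simp_all add: phi_def\<close>)

lemma proot_eqI:
  assumes "R > 1" "p \<in> {0..1}" "phi u w R p = 0"
  shows "proot u w R = p"
  unfolding proot_def using assms phi_root_unique by (intro the_equality) auto

lemma phi_root_between:
  assumes "0 \<le> q" "q \<le> 1/2" "phi u w R q \<ge> 0"
  obtains p where "q \<le> p" "p < 1/2" "phi u w R p = 0"
proof -
  obtain p where p: "q \<le> p" "p \<le> 1/2" "phi u w R p = 0"
    using IVT2'[of "phi u w R" "1/2" 0 q] assms less_imp_le[OF phi_half_neg] continuous_on_phi by auto
  moreover have "p \<noteq> 1/2" using p(3) phi_half_neg[of R] by (metis less_irrefl)
  ultimately show thesis using that by simp
qed

lemma proot_bounds: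
  assumes "R > 1"
  shows "phi u w R (proot u w R) = 0" "0 < proot u w R" "proot u w R < 1/2"
proof -
  obtain p where p: "0 \<le> p" "p < 1/2" "phi u w R p = 0"
    using phi_root_between[of 0 R] u by auto
  have "proot u w R = p" using proot_eqI[OF assms] p by simp
  moreover have "p \<noteq> 0" using p(3) u by auto
  ultimately show "phi u w R (proot u w R) = 0" "0 < proot u w R" "proot u w R < 1/2"
    using p by auto
qed

lemma less_proot:
  assumes "R > 1" "0 \<le> q" "q < 1/2" "phi u w R q > 0"
  shows "q < proot u w R"
proof -
  obtain p where p: "q \<le> p" "p < 1/2" "phi u w R p = 0"
    using phi_root_between[of q R] assms by auto
  then have "proot u w R = p" using proot_eqI[OF \<open>R > 1\<close>] assms(2) by simp
  moreover have "p \<noteq> q" using p(3) assms(4) by auto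
  ultimately show ?thesis using p(1) by simp
qed

lemma strict_mono_on_proot: "strict_mono_on {1<..} (proot u w)"
proof (rule strict_mono_onI)
  fix r s :: real
  assume "r \<in> {1<..}" "s \<in> {1<..}" "r < s"
  define p where "p = proot u w r"
  have p: "phi u w r p = 0" "0 < p" "p < 1/2"
    using proot_bounds \<open>r \<in> {1<..}\<close> unfolding p_def by auto
  have "phi u w s p = phi u w r p + (s - r) * (u*w*p*(1 - 2*p))"
    unfolding phi_linear_in_R by (simp add: algebra_simps)
  also have "\<dots> > 0" using p u w \<open>r < s\<close> by simp
  finally show "p < proot u w s"
    using less_proot \<open>s \<in> {1<..}\<close> p by simp
qed

lemma eventually_less_proot:
  assumes "a < 1/2"
  shows "\<forall>\<^sub>F R in at_top. a < proot u w R"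
proof -
  define q where "q = max a (1/4)"
  have q: "0 \<le> q" "q < 1/2" "a \<le> q" using assms unfolding q_def by auto
  define f where "f = 2*w*q^2 + (u*w - 2*u - 2*w)*q + u"
  define g where "g = u*w*q*(1 - 2*q)"
  have "g > 0" unfolding g_def using q u w unfolding q_def by auto
  show ?thesis
    using eventually_gt_at_top[of "max 1 (- f / g)"]
  proof eventually_elim
    case (elim R)
    then have "- f / g * g < R * g" using \<open>g > 0\<close> by (intro mult_strict_right_mono) auto
    then have "- f < R * g" using \<open>g > 0\<close> by simp
    then have "phi u w R q > 0" unfolding phi_linear_in_R f_def g_def by simp
    then show "a < proot u w R" using less_proot[of R q] q elim by simp
  qed
qed

lemma proot_tendsto_half: "(proot u w \<longlongrightarrow> 1/2) at_top"
proof (rule order_tendstoI)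
  fix b :: real
  assume "b > 1/2"
  show "\<forall>\<^sub>F R in at_top. proot u w R < b"
    using eventually_gt_at_top[of 1]
    by eventually_elim (use proot_bounds \<open>b > 1/2\<close> in force)
qed (rule eventually_less_proot)

end

theorem mainTheorem2:
  fixes u w :: real
  assumes "0 < u" "u < 1" "0 < w" "w \<le> 1"
  shows "(\<forall>R > 1. \<exists>!p. p \<in> {0..1} \<and> phi u w R p = 0)
       \<and> strict_mono_on {1<..} (proot u w)
       \<and> ((proot u w) \<longlongrightarrow> 1/2) at_top"
proof (intro conjI allI impI)
  fix R :: real
  assume "R > 1"
  then have "proot u w R \<in> {0..1}" "phi u w R (proot u w R) = 0"
    using proot_bounds[OF assms \<open>R > 1\<close>] by auto
  then show "\<exists>!p. p \<in> {0..1} \<and> phi u w R p = 0"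
    using phi_root_unique[OF assms \<open>R > 1\<close>] by blast
qed (use strict_mono_on_proot[OF assms] proot_tendsto_half[OF assms] in simp_all)

end
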